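(* Let $M\ge2$ be an integer, $\phi\in\mathbb{R}$, and let $\varphi$ be a random variable on $[0,2\pi)$ with density $f(\varphi)=\frac{M}{2\pi}\frac{\mathrm{sinc}^2(\frac M2|\phi-\varphi|_{2\pi})}{\mathrm{sinc}^2(\frac12|\phi-\varphi|_{2\pi})}$. Then $\mathbb{E}[e^{i\varphi}]=\big(1-\frac1M\big)e^{i\phi}$ and $\mathbb{E}[\sin^2(\varphi-\phi)]=\frac1M$. Consequently $\big(1+\frac{1}{M-1}\big)e^{i\varphi}$ is an unbiased estimator of $e^{i\phi}$ with variance $\Theta(1/M)$.
   Context: $|x|_{2\pi}:=\min\{|x-2\pi\ell|:\ell\in\mathbb{Z}\}$; $\mathrm{sinc}(x)=\sin(x)/x$ for $x\neq0$, $\mathrm{sinc}(0)=1$. This density is exactly the output distribution of the randomized phase estimation procedure: sample $u\sim\mathrm{Unif}[0,1)$, apply the phases $e^{-2\pi i u k/M}$ to $\frac1{\sqrt M}\sum_{k<M}e^{i\phi k}\ket k$, apply the inverse Fourier transform over $\mathbb{Z}_M$, measure $j$, output $\frac{2\pi}{M}(j+u)$. *)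

theory Defs
  imports "HOL-Probability.Probability" "HOL-Library.Landau_Symbols"
begin

definition dist2pi :: "real \<Rightarrow> real" where
  "dist2pi x = Inf ((\<lambda>l::int. \<bar>x - 2 * pi * of_int l\<bar>) ` UNIV)"

definition sinc :: "real \<Rightarrow> real" where
  "sinc x = (if x = 0 then 1 else sin x / x)"

definition qpe_density :: "nat \<Rightarrow> real \<Rightarrow> real \<Rightarrow> real" where
  "qpe_density M phi x =
     real M / (2 * pi) * (sinc (real M / 2 * dist2pi (phi - x)))\<^sup>2
       / (sinc (1 / 2 * dist2pi (phi - x)))\<^sup>2"

definition qpe_dist :: "nat \<Rightarrow> real \<Rightarrow> real measure" where
  "qpe_dist M phi = density lborel
     (\<lambda>x. ennreal (indicator {0..<2*pi} x * qpe_density M phi x))"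

definition qpe_est_var :: "nat \<Rightarrow> real \<Rightarrow> real" where
  "qpe_est_var M phi = integral\<^sup>L (qpe_dist M phi)
     (\<lambda>x. (cmod (complex_of_real (1 + 1 / (real M - 1)) * cis x - cis phi))\<^sup>2)"

end

theory Submission
  imports Defs "HOL-Real_Asymp.Real_Asymp"
begin

text \<open>
  Summing the geometric series shows that the density at \<open>x\<close> is
  \<open>|\<Sum>k<M. exp(ik(\<phi> - x))|\<^sup>2 / (2\<pi>M)\<close>, the Fejer kernel centred at \<open>\<phi>\<close>;
  the distance to the nearest multiple of \<open>2\<pi>\<close> enters only through periodicity.
  Expanding the square gives a trigonometric polynomial in \<open>x\<close> in which the frequency
  \<open>m\<close> occurs \<open>M - m\<close> times, each time with coefficient \<open>exp(im\<phi>) / (2\<pi>M)\<close>, so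
  orthogonality of the characters on \<open>[0, 2\<pi>]\<close> gives \<open>E[exp(imx)] = (1 - m/M) exp(im\<phi>)\<close>.
  The case \<open>m = 0\<close> says that the density has mass one and \<open>m = 1\<close> is the mean.
  Since \<open>sin\<^sup>2 \<theta> = (1 - cos 2\<theta>) / 2\<close>, the case \<open>m = 2\<close> gives \<open>E[sin\<^sup>2(x - \<phi>)] = 1/M\<close>;
  and for \<open>c = M/(M - 1)\<close> the squared error \<open>|c exp(ix) - exp(i\<phi>)|\<^sup>2 = c\<^sup>2 + 1 - 2c cos(x - \<phi>)\<close>
  has mean \<open>c\<^sup>2 - 1\<close>, which is of order \<open>1/M\<close>.
\<close>

definition dirichlet_sum :: "nat \<Rightarrow> real \<Rightarrow> complex" where
  "dirichlet_sum M t = (\<Sum>k<M. cis (real k * t))"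

lemma dirichlet_sum_geometric: "(cis t - 1) * dirichlet_sum M t = cis (real M * t) - 1"
proof (induction M)
  case 0
  then show ?case by (simp add: dirichlet_sum_def)
next
  case (Suc M)
  have "(cis t - 1) * dirichlet_sum (Suc M) t
      = cis (real M * t) - 1 + (cis t - 1) * cis (real M * t)"
    using Suc by (simp add: dirichlet_sum_def algebra_simps)
  also have "\<dots> = cis (real (Suc M) * t) - 1"
    by (simp add: algebra_simps cis_mult)
  finally show ?case .
qed

lemma norm_cis_minus_one_squared: "(cmod (cis t - 1))\<^sup>2 = 4 * (sin (t / 2))\<^sup>2"
proof -
  have "(cmod (cis t - 1))\<^sup>2 = (cos t - 1)\<^sup>2 + (sin t)\<^sup>2"
    by (simp add: cmod_power2)
  also have "\<dots> = 2 - 2 * cos t"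
    by (simp add: power2_eq_square algebra_simps sin_squared_eq)
  finally show ?thesis
    using cos_double_sin[of "t / 2"] by simp
qed

lemma norm_dirichlet_sum_squared:
  assumes "sin (t / 2) \<noteq> 0"
  shows "(cmod (dirichlet_sum M t))\<^sup>2 = (sin (real M * t / 2))\<^sup>2 / (sin (t / 2))\<^sup>2"
proof -
  have "(cmod (cis t - 1))\<^sup>2 * (cmod (dirichlet_sum M t))\<^sup>2 = (cmod (cis (real M * t) - 1))\<^sup>2"
    by (metis dirichlet_sum_geometric norm_mult power_mult_distrib)
  then show ?thesis
    using assms by (simp add: norm_cis_minus_one_squared field_simps)
qed

lemma dirichlet_sum_diff_int_multiple_2pi:
  "dirichlet_sum M (t - 2 * pi * of_int l) = dirichlet_sum M t"
proof -
  have "cis (real k * (t - 2 * pi * of_int l)) = cis (real k * t)" for k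
  proof -
    have "cis (real k * (t - 2 * pi * of_int l))
        = cis (real k * t) * cnj (cis (2 * pi * of_int (int k * l)))"
      by (simp add: cis_mult cis_cnj algebra_simps)
    then show ?thesis by simp
  qed
  then show ?thesis by (simp add: dirichlet_sum_def)
qed

lemma dirichlet_sum_minus: "dirichlet_sum M (- t) = cnj (dirichlet_sum M t)"
  by (simp add: dirichlet_sum_def cis_cnj)

lemma dirichlet_sum_0 [simp]: "dirichlet_sum M 0 = of_nat M"
  by (simp add: dirichlet_sum_def)

lemma norm_dirichlet_sum_squared_eq_double_sum:
  "complex_of_real ((cmod (dirichlet_sum M t))\<^sup>2) = (\<Sum>k<M. \<Sum>l<M. cis ((real k - real l) * t))"
proof -
  have "complex_of_real ((cmod (dirichlet_sum M t))\<^sup>2) = dirichlet_sum M t * cnj (dirichlet_sum M t)"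
    by (rule complex_norm_square)
  also have "\<dots> = (\<Sum>k<M. \<Sum>l<M. cis (real k * t) * cis (- (real l * t)))"
    by (simp add: dirichlet_sum_def cis_cnj sum_product)
  also have "\<dots> = (\<Sum>k<M. \<Sum>l<M. cis ((real k - real l) * t))"
    by (simp add: cis_mult algebra_simps)
  finally show ?thesis .
qed

lemma dist2pi_eq_nearest:
  fixes t :: real
  defines "l0 \<equiv> \<lfloor>t / (2 * pi) + 1 / 2\<rfloor>"
  shows "dist2pi t = \<bar>t - 2 * pi * of_int l0\<bar>" and "dist2pi t \<le> pi"
proof -
  let ?u = "t / (2 * pi)"
  have l0: "?u - of_int l0 < 1 / 2" "?u - of_int l0 \<ge> - 1 / 2"
    unfolding l0_def using floor_correct[of "?u + 1 / 2"] by linarith+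
  have scaled: "\<bar>t - 2 * pi * of_int l\<bar> = 2 * pi * \<bar>?u - of_int l\<bar>" for l
  proof -
    have "t - 2 * pi * of_int l = 2 * pi * (?u - of_int l)" by (simp add: field_simps)
    then show ?thesis by (simp add: abs_mult)
  qed
  have nearest: "\<bar>t - 2 * pi * of_int l0\<bar> \<le> pi"
  proof -
    have "\<bar>?u - of_int l0\<bar> \<le> 1 / 2"
      using l0 by linarith
    then show ?thesis
      using scaled[of l0] pi_gt_zero mult_left_mono[of "\<bar>?u - of_int l0\<bar>" "1 / 2" "2 * pi"] by simp
  qed
  have others: "\<bar>t - 2 * pi * of_int l\<bar> \<ge> pi" if "l \<noteq> l0" for l
  proof -
    have "\<bar>?u - of_int l\<bar> \<ge> 1 / 2"
      using l0 that by (cases "l > l0") linarith+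
    then show ?thesis
      using scaled[of l] pi_gt_zero mult_left_mono[of "1 / 2" "\<bar>?u - of_int l\<bar>" "2 * pi"] by simp
  qed
  show "dist2pi t = \<bar>t - 2 * pi * of_int l0\<bar>"
    unfolding dist2pi_def by (rule cInf_eq_minimum) (use nearest others in force)+
  with nearest show "dist2pi t \<le> pi" by simp
qed

lemma norm_dirichlet_sum_dist2pi: "cmod (dirichlet_sum M (dist2pi t)) = cmod (dirichlet_sum M t)"
proof -
  obtain l where l: "dist2pi t = \<bar>t - 2 * pi * of_int l\<bar>"
    using dist2pi_eq_nearest(1) by blast
  show ?thesis
  proof (cases "t - 2 * pi * of_int l \<ge> 0")
    case True
    then show ?thesis
      using l by (simp add: dirichlet_sum_diff_int_multiple_2pi)
  next
    case False
    then have "dist2pi t = - (t - 2 * pi * of_int l)"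
      using l by simp
    then show ?thesis
      by (metis complex_mod_cnj dirichlet_sum_minus dirichlet_sum_diff_int_multiple_2pi)
  qed
qed

definition fejer_density :: "nat \<Rightarrow> real \<Rightarrow> real \<Rightarrow> real" where
  "fejer_density M phi x = (cmod (dirichlet_sum M (phi - x)))\<^sup>2 / (2 * pi * real M)"

lemma qpe_density_eq_fejer_density:
  assumes "M \<ge> 1"
  shows "qpe_density M phi x = fejer_density M phi x"
proof -
  define d where "d = dist2pi (phi - x)"
  have d: "0 \<le> d" "d \<le> pi"
    using dist2pi_eq_nearest[of "phi - x"] unfolding d_def by auto
  have "fejer_density M phi x = (cmod (dirichlet_sum M d))\<^sup>2 / (2 * pi * real M)"
    by (simp add: fejer_density_def d_def norm_dirichlet_sum_dist2pi)
  moreover have "qpe_density M phi x = real M / (2 * pi) * (sinc (real M / 2 * d))\<^sup>2 / (sinc (d / 2))\<^sup>2"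
    by (simp add: qpe_density_def d_def)
  moreover have "real M / (2 * pi) * (sinc (real M / 2 * d))\<^sup>2 / (sinc (d / 2))\<^sup>2
      = (cmod (dirichlet_sum M d))\<^sup>2 / (2 * pi * real M)"
  proof (cases "d = 0")
    case True
    then show ?thesis
      using assms by (simp add: sinc_def power2_eq_square)
  next
    case False
    have "sin (d / 2) > 0"
      using d False by (intro sin_gt_zero) auto
    then have "(cmod (dirichlet_sum M d))\<^sup>2 = (sin (real M * d / 2))\<^sup>2 / (sin (d / 2))\<^sup>2"
      by (intro norm_dirichlet_sum_squared) simp
    then show ?thesis
      using False assms \<open>sin (d / 2) > 0\<close>
      by (simp add: sinc_def power_divide field_simps power2_eq_square)
  qed
  ultimately show ?thesis by simp
qed

lemma set_integral_sum:
  fixes f :: "'i \<Rightarrow> 'a \<Rightarrow> 'b::{banach, second_countable_topology}"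
  assumes "\<And>i. i \<in> I \<Longrightarrow> set_integrable M A (f i)"
  shows "(LINT x:A|M. (\<Sum>i\<in>I. f i x)) = (\<Sum>i\<in>I. LINT x:A|M. f i x)"
  using assms unfolding set_lebesgue_integral_def set_integrable_def
  by (simp add: scaleR_sum_right Bochner_Integration.integral_sum)

lemma set_integral_cis_int_mult_period:
  "(LINT x:{0..2*pi}|lborel. cis (of_int n * x)) = (if n = 0 then 2 * pi else 0)"
proof (cases "n = 0")
  case True
  have "(LINT x:{0..2*pi}|lborel. cis (of_int n * x)) = of_real (2 * pi) - of_real 0"
    unfolding set_lebesgue_integral_def using True
    by (intro integral_FTC_atLeastAtMost) (auto intro!: derivative_eq_intros continuous_intros)
  with True show ?thesis by simp
next
  case False
  define F where "F x = exp (\<i> * of_int n * of_real x) / (\<i> * of_int n)" for x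
  have "(LINT x:{0..2*pi}|lborel. cis (of_int n * x)) = F (2 * pi) - F 0"
    unfolding set_lebesgue_integral_def
  proof (intro integral_FTC_atLeastAtMost)
    show "(F has_vector_derivative cis (of_int n * x)) (at x within {0..2*pi})" for x
    proof -
      have "(F has_vector_derivative exp (\<i> * of_int n * of_real x)) (at x within {0..2*pi})"
        unfolding F_def using False
        by (auto intro!: derivative_eq_intros has_vector_derivative_real_field)
      then show ?thesis
        by (simp add: cis_conv_exp mult_ac)
    qed
  qed (auto intro: continuous_intros)
  moreover have "F (2 * pi) = F 0"
  proof -
    have "exp (\<i> * of_int n * of_real (2 * pi)) = cis (2 * pi * of_int n)"
      by (simp add: cis_conv_exp mult_ac)
    then show ?thesis
      by (simp add: F_def)
  qed
  ultimately show ?thesis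
    using False by simp
qed

lemma card_pairs_with_difference:
  "card {(k, l). k < M \<and> l < M \<and> k = l + m} = M - m"
proof -
  have "{(k, l). k < M \<and> l < M \<and> k = l + m} = (\<lambda>l. (l + m, l)) ` {..<M - m}"
    by auto
  moreover have "inj_on (\<lambda>l. (l + m, l)) {..<M - m}"
    by (rule inj_onI) simp
  ultimately show ?thesis
    by (simp add: card_image)
qed

lemma fejer_density_eq_sum:
  "complex_of_real (fejer_density M phi x)
     = (\<Sum>(k, l)\<in>{..<M} \<times> {..<M}. cis ((real k - real l) * (phi - x))) / of_real (2 * pi * real M)"
  by (simp only: fejer_density_def of_real_divide norm_dirichlet_sum_squared_eq_double_sum
      sum.cartesian_product)

lemma fejer_density_moment:
  "(LINT x:{0..2*pi}|lborel. fejer_density M phi x *\<^sub>R cis (real m * x))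
     = complex_of_real (real (M - m) / real M) * cis (real m * phi)"
proof -
  define P where "P = {..<M} \<times> {..<M}"
  define c where "c k l = cis ((real k - real l) * phi) / of_real (2 * pi * real M)" for k l :: nat
  define n where "n k l = int m - int k + int l" for k l :: nat
  have expand: "fejer_density M phi x *\<^sub>R cis (real m * x)
      = (\<Sum>(k, l)\<in>P. c k l * cis (of_int (n k l) * x))" for x
  proof -
    have "fejer_density M phi x *\<^sub>R cis (real m * x)
        = (\<Sum>(k, l)\<in>P. cis ((real k - real l) * (phi - x)) * cis (real m * x)) / of_real (2 * pi * real M)"
      by (simp add: scaleR_conv_of_real fejer_density_eq_sum P_def sum_distrib_right case_prod_unfold)
    also have "\<dots> = (\<Sum>(k, l)\<in>P. c k l * cis (of_int (n k l) * x))"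
      by (simp add: c_def n_def sum_divide_distrib cis_mult algebra_simps case_prod_unfold)
    finally show ?thesis .
  qed
  have "(LINT x:{0..2*pi}|lborel. cis (of_int (n k l) * x)) = (if k = l + m then 2 * pi else 0)" for k l
    using set_integral_cis_int_mult_period[of "n k l"] by (auto simp: n_def)
  then have integral_term: "c k l * (LINT x:{0..2*pi}|lborel. cis (of_int (n k l) * x))
      = (if k = l + m then cis (real m * phi) / of_nat M else 0)" for k l
    by (simp add: c_def)
  have finite_P: "finite P"
    by (simp add: P_def)
  have integrable: "set_integrable lborel {0..2*pi} (\<lambda>x. c k l * cis (of_int (n k l) * x))" for k l
    by (intro borel_integrable_atLeastAtMost' continuous_intros)
  have "(LINT x:{0..2*pi}|lborel. fejer_density M phi x *\<^sub>R cis (real m * x))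
      = (\<Sum>(k, l)\<in>P. if k = l + m then cis (real m * phi) / of_nat M else 0)"
    unfolding expand using integrable
    by (simp add: set_integral_sum case_prod_unfold integral_term)
  also have "\<dots> = (\<Sum>p\<in>{(k, l) \<in> P. k = l + m}. cis (real m * phi) / of_nat M)"
    by (rule sum.mono_neutral_cong_right) (auto simp: finite_P split: if_splits)
  also have "\<dots> = complex_of_real (real (M - m) / real M) * cis (real m * phi)"
    by (simp add: P_def card_pairs_with_difference)
  finally show ?thesis .
qed

lemma fejer_density_nonneg: "fejer_density M phi x \<ge> 0"
  by (simp add: fejer_density_def)

lemma continuous_on_fejer_density: "continuous_on A (fejer_density M phi)"
  unfolding fejer_density_def dirichlet_sum_def divide_inverse by (intro continuous_intros)

lemma borel_measurable_fejer_density [measurable]: "fejer_density M phi \<in> borel_measurable borel"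
  by (intro borel_measurable_continuous_onI continuous_on_fejer_density)

lemma set_integral_fejer_density:
  assumes "M \<ge> 1"
  shows "(LINT x:{0..2*pi}|lborel. fejer_density M phi x) = 1"
proof -
  have "complex_of_real (LINT x:{0..2*pi}|lborel. fejer_density M phi x)
      = (LINT x:{0..2*pi}|lborel. fejer_density M phi x *\<^sub>R cis (real 0 * x))"
    by (simp add: set_integral_complex_of_real scaleR_conv_of_real)
  also have "\<dots> = 1"
    using assms fejer_density_moment[of M phi 0] by simp
  finally show ?thesis by simp
qed

lemma qpe_dist_eq_density_fejer:
  assumes "M \<ge> 1"
  shows "qpe_dist M phi = density lborel (\<lambda>x. ennreal (indicator {0..<2*pi} x * fejer_density M phi x))"
  using assms by (simp add: qpe_dist_def qpe_density_eq_fejer_density)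

lemma integral_qpe_dist:
  fixes f :: "real \<Rightarrow> 'b::{banach, second_countable_topology}"
  assumes "M \<ge> 1" and [measurable]: "f \<in> borel_measurable borel"
  shows "(\<integral>x. f x \<partial>qpe_dist M phi) = (LINT x:{0..2*pi}|lborel. fejer_density M phi x *\<^sub>R f x)"
proof -
  have "(\<integral>x. f x \<partial>qpe_dist M phi) = (\<integral>x. (indicator {0..<2*pi} x * fejer_density M phi x) *\<^sub>R f x \<partial>lborel)"
    unfolding qpe_dist_eq_density_fejer[OF assms(1)]
    by (rule integral_density) (auto simp: fejer_density_nonneg)
  also have "\<dots> = (LINT x:{0..2*pi}|lborel. fejer_density M phi x *\<^sub>R f x)"
    unfolding set_lebesgue_integral_def
    using AE_lborel_singleton[of "2 * pi"]
    by (intro integral_cong_AE) (auto elim!: eventually_mono split: split_indicator)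
  finally show ?thesis .
qed

lemma prob_space_qpe_dist:
  assumes "M \<ge> 1"
  shows "prob_space (qpe_dist M phi)"
proof
  have "measure (qpe_dist M phi) (space (qpe_dist M phi)) = (\<integral>x. 1 \<partial>qpe_dist M phi)"
    by simp
  also have "\<dots> = 1"
    using integral_qpe_dist[OF assms, of "\<lambda>_. 1 :: real"] set_integral_fejer_density[OF assms] by simp
  finally show "emeasure (qpe_dist M phi) (space (qpe_dist M phi)) = 1"
    by (simp add: measure_def)
qed

lemma integrable_qpe_dist_bounded:
  fixes f :: "real \<Rightarrow> 'b::{banach, second_countable_topology}"
  assumes "M \<ge> 1" and "f \<in> borel_measurable borel" and "\<And>x. norm (f x) \<le> B"
  shows "integrable (qpe_dist M phi) f"
proof -
  interpret prob_space "qpe_dist M phi"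
    using assms(1) by (rule prob_space_qpe_dist)
  show ?thesis
    using assms(2,3) by (intro integrable_const_bound[where B = B]) (auto simp: qpe_dist_def)
qed

lemma integrable_qpe_dist_cos_mult_diff:
  assumes "M \<ge> 1"
  shows "integrable (qpe_dist M phi) (\<lambda>x. cos (a * (x - phi)))"
  using assms
  by (intro integrable_qpe_dist_bounded[where B = 1] borel_measurable_continuous_onI continuous_intros)
    simp_all

lemma qpe_dist_integral_cis_mult:
  assumes "M \<ge> 1"
  shows "(\<integral>x. cis (real m * x) \<partial>qpe_dist M phi)
    = complex_of_real (real (M - m) / real M) * cis (real m * phi)"
  unfolding fejer_density_moment[symmetric]
  using assms by (intro integral_qpe_dist borel_measurable_continuous_onI continuous_intros)

lemma qpe_dist_integral_cos_mult_diff: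
  assumes "M \<ge> 1"
  shows "(\<integral>x. cos (real m * (x - phi)) \<partial>qpe_dist M phi) = real (M - m) / real M"
proof -
  let ?c = "cis (- (real m * phi))"
  have "integrable (qpe_dist M phi) (\<lambda>x. cis (real m * x))"
    using assms
    by (intro integrable_qpe_dist_bounded[where B = 1] borel_measurable_continuous_onI continuous_intros)
      simp_all
  moreover have "cos (real m * (x - phi)) = Re (?c * cis (real m * x))" for x
    by (simp add: cis_mult algebra_simps)
  ultimately have "(\<integral>x. cos (real m * (x - phi)) \<partial>qpe_dist M phi)
      = Re (\<integral>x. ?c * cis (real m * x) \<partial>qpe_dist M phi)"
    by (simp only: integral_Re integrable_mult_right)
  also have "\<dots> = Re (?c * (complex_of_real (real (M - m) / real M) * cis (real m * phi)))"
    by (simp only: integral_mult_right_zero qpe_dist_integral_cis_mult[OF assms])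
  also have "\<dots> = Re (complex_of_real (real (M - m) / real M) * (?c * cis (real m * phi)))"
    by (simp only: mult.left_commute)
  also have "\<dots> = real (M - m) / real M"
    by (simp add: cis_mult)
  finally show ?thesis .
qed

lemma qpe_dist_integral_sin_diff_squared:
  assumes "M \<ge> 2"
  shows "(\<integral>x. (sin (x - phi))\<^sup>2 \<partial>qpe_dist M phi) = 1 / real M"
proof -
  have M: "M \<ge> 1"
    using assms by simp
  interpret prob_space "qpe_dist M phi"
    using M by (rule prob_space_qpe_dist)
  have "(sin (x - phi))\<^sup>2 = (1 - cos (real 2 * (x - phi))) / 2" for x
    using cos_double_sin[of "x - phi"] by simp
  then have "(\<integral>x. (sin (x - phi))\<^sup>2 \<partial>qpe_dist M phi)
      = (\<integral>x. (1 - cos (real 2 * (x - phi))) / 2 \<partial>qpe_dist M phi)"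
    by (simp only:)
  also have "\<dots> = (1 - (\<integral>x. cos (real 2 * (x - phi)) \<partial>qpe_dist M phi)) / 2"
    using integrable_qpe_dist_cos_mult_diff[OF M, of phi "real 2"]
    by (simp only: integral_divide_zero Bochner_Integration.integral_diff integrable_const)
      (simp add: prob_space)
  also have "\<dots> = 1 / real M"
    using assms qpe_dist_integral_cos_mult_diff[OF M, where m = 2 and phi = phi]
    by (simp add: of_nat_diff field_simps)
  finally show ?thesis .
qed

lemma norm_scaled_cis_minus_cis_squared:
  "(cmod (complex_of_real c * cis x - cis y))\<^sup>2 = c\<^sup>2 + 1 - 2 * c * cos (x - y)"
proof -
  have "(cmod (complex_of_real c * cis x - cis y))\<^sup>2 = (c * cos x - cos y)\<^sup>2 + (c * sin x - sin y)\<^sup>2"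
    by (simp add: cmod_power2)
  also have "\<dots> = c\<^sup>2 * ((sin x)\<^sup>2 + (cos x)\<^sup>2) + ((sin y)\<^sup>2 + (cos y)\<^sup>2)
      - 2 * c * (cos x * cos y + sin x * sin y)"
    by algebra
  also have "\<dots> = c\<^sup>2 + 1 - 2 * c * cos (x - y)"
    by (simp only: sin_cos_squared_add mult_1_right cos_diff)
  finally show ?thesis .
qed

lemma qpe_est_var_eq:
  assumes "M \<ge> 2"
  shows "qpe_est_var M phi = (1 + 1 / (real M - 1))\<^sup>2 - 1"
proof -
  define c where "c = 1 + 1 / (real M - 1)"
  have M: "M \<ge> 1"
    using assms by simp
  interpret prob_space "qpe_dist M phi"
    using M by (rule prob_space_qpe_dist)
  have mean_cos: "(\<integral>x. cos (x - phi) \<partial>qpe_dist M phi) = (real M - 1) / real M"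
    using qpe_dist_integral_cos_mult_diff[OF M, where m = 1 and phi = phi] M by (simp add: of_nat_diff)
  have unbiased: "c * ((real M - 1) / real M) = 1"
    using assms by (simp add: c_def field_simps)
  have "qpe_est_var M phi = (\<integral>x. c\<^sup>2 + 1 - 2 * c * cos (x - phi) \<partial>qpe_dist M phi)"
    unfolding qpe_est_var_def c_def[symmetric] norm_scaled_cis_minus_cis_squared ..
  also have "\<dots> = c\<^sup>2 + 1 - 2 * c * (\<integral>x. cos (x - phi) \<partial>qpe_dist M phi)"
    using integrable_qpe_dist_cos_mult_diff[OF M, of phi 1] by (simp add: prob_space)
  also have "\<dots> = c\<^sup>2 - 1"
    unfolding mean_cos mult.assoc unbiased by simp
  finally show ?thesis
    unfolding c_def .
qed

theorem mainTheorem9: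
  fixes M :: nat and phi :: real
  assumes "M \<ge> 2"
  shows "prob_space (qpe_dist M phi)
    \<and> integral\<^sup>L (qpe_dist M phi) (\<lambda>x. cis x) = complex_of_real (1 - 1 / real M) * cis phi
    \<and> integral\<^sup>L (qpe_dist M phi) (\<lambda>x. (sin (x - phi))\<^sup>2) = 1 / real M
    \<and> integral\<^sup>L (qpe_dist M phi) (\<lambda>x. complex_of_real (1 + 1 / (real M - 1)) * cis x) = cis phi
    \<and> (\<lambda>N. qpe_est_var N phi) \<in> \<Theta>(\<lambda>N. 1 / real N)"
proof (intro conjI)
  have M: "M \<ge> 1"
    using assms by simp
  show "prob_space (qpe_dist M phi)"
    using M by (rule prob_space_qpe_dist)
  show mean: "(\<integral>x. cis x \<partial>qpe_dist M phi) = complex_of_real (1 - 1 / real M) * cis phi"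
    using qpe_dist_integral_cis_mult[OF M, where m = 1] M by (simp add: of_nat_diff diff_divide_distrib)
  show "(\<integral>x. (sin (x - phi))\<^sup>2 \<partial>qpe_dist M phi) = 1 / real M"
    using assms by (rule qpe_dist_integral_sin_diff_squared)
  show "(\<integral>x. complex_of_real (1 + 1 / (real M - 1)) * cis x \<partial>qpe_dist M phi) = cis phi"
    using assms by (simp add: mean field_simps flip: of_real_mult)
  have "\<forall>\<^sub>F N in at_top. qpe_est_var N phi = (1 + 1 / (real N - 1))\<^sup>2 - 1"
    using eventually_ge_at_top[of 2] by eventually_elim (rule qpe_est_var_eq)
  moreover have "(\<lambda>N::nat. (1 + 1 / (real N - 1))\<^sup>2 - 1) \<in> \<Theta>(\<lambda>N. 1 / real N)"
    by real_asymp
  ultimately show "(\<lambda>N. qpe_est_var N phi) \<in> \<Theta>(\<lambda>N. 1 / real N)"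
    by (simp add: landau_theta.in_cong)
qed

end
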